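(* Let $(A,W)$ be a Pratt comonoid, let $x_0\supseteq x_1\supseteq\cdots$ be an $\omega$-indexed descending chain of elements of $W$, and let $y_0\subseteq y_1\subseteq\cdots$ be an $\omega$-indexed ascending chain of elements of $W$. Suppose that $\bigcap_{m\in\omega}x_m=\emptyset$, and that for no pair $(m,n)\in\omega\times\omega$ does $y_n$ contain $x_m\cap\bigcup_{i\in\omega}y_i$. Then $W$ has at least continuum cardinality; in fact $W$ contains a complete sublattice isomorphic to the lattice of all subsets of $\omega$.
   Context: A Pratt comonoid is a pair $(A,W)$ where $A$ is a set and $W$ is a set of subsets of $A$ such that (i) $\emptyset\in W$ and $A\in W$; (ii) whenever $C\subseteq A\times A$ is such that for every $a\in A$ both the $a$-th row $\{b\mid (a,b)\in C\}$ and the $a$-th column $\{b\mid (b,a)\in C\}$ belong to $W$ (a crossword over $W$), the diagonal $\{b\mid (b,b)\in C\}$ also belongs to $W$. A complete sublattice of $W$ is a subset of $W$ closed under arbitrary (possibly infinite) unions and intersections taken in the power set of $A$, not necessarily containing $\emptyset$ or $A$. *)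

theory Defs
  imports Main
begin

definition crossword :: "'a set \<Rightarrow> 'a set set \<Rightarrow> ('a \<times> 'a) set \<Rightarrow> bool" where
  "crossword A W C \<longleftrightarrow> C \<subseteq> A \<times> A \<and>
     (\<forall>a\<in>A. {b. (a, b) \<in> C} \<in> W \<and> {b. (b, a) \<in> C} \<in> W)"

definition diagonal :: "('a \<times> 'a) set \<Rightarrow> 'a set" where
  "diagonal C = {b. (b, b) \<in> C}"

definition pratt_comonoid :: "'a set \<Rightarrow> 'a set set \<Rightarrow> bool" where
  "pratt_comonoid A W \<longleftrightarrow> W \<subseteq> Pow A \<and> {} \<in> W \<and> A \<in> W \<and>
     (\<forall>C. crossword A W C \<longrightarrow> diagonal C \<in> W)"

text \<open>A complete sublattice of W: a subset of W closed under unions and intersections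
  of arbitrary nonempty subfamilies (taken in the power set of A; the empty family is
  excluded since a complete sublattice need not contain the empty set or A).\<close>
definition complete_sublattice :: "'a set set \<Rightarrow> 'a set set \<Rightarrow> bool" where
  "complete_sublattice W S \<longleftrightarrow> S \<subseteq> W \<and>
     (\<forall>T. T \<subseteq> S \<and> T \<noteq> {} \<longrightarrow> \<Union>T \<in> S \<and> \<Inter>T \<in> S)"

end

theory Submission
  imports Defs
begin

text \<open>
  Pass to subsequences so that there are points \<open>w k \<in> x (a k) - x (a (k+1))\<close> with
  \<open>w k \<in> y (b (k+1)) - y (b k)\<close>. Every point \<open>c\<close> of \<open>A\<close> has a first exit time \<open>m c\<close> from the
  decreasing chain \<open>u k = x (a (k+1))\<close>, and \<open>m (w k) = k\<close>. For \<open>X \<subseteq> \<omega>\<close> let \<open>\<phi> X\<close> consist of the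
  points \<open>c\<close> lying in \<open>y (b (m c + 1))\<close> if \<open>m c \<in> X\<close> and in \<open>y (b (m c))\<close> otherwise. This is the
  diagonal of the crossword whose \<open>c\<close>-th row is that set: its columns are \<open>\<emptyset>\<close>, \<open>A\<close> or some
  \<open>u k\<close>, so \<open>\<phi> X \<in> W\<close>. Membership of \<open>c\<close> in \<open>\<phi> X\<close> depends monotonically on the single bit
  \<open>m c \<in> X\<close>, so \<open>\<phi>\<close> preserves all nonempty unions and intersections, and \<open>w k \<in> \<phi> X \<longleftrightarrow> k \<in> X\<close>
  makes it an order embedding.
\<close>

definition first_exit :: "(nat \<Rightarrow> 'a set) \<Rightarrow> 'a \<Rightarrow> nat" where
  "first_exit u c = (LEAST k. c \<notin> u k)"

lemma first_exit_eqI: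
  assumes "c \<notin> u k" and "\<And>j. j < k \<Longrightarrow> c \<in> u j"
  shows "first_exit u c = k"
  unfolding first_exit_def
proof (rule Least_equality)
  show "c \<notin> u k" by fact
  show "k \<le> j" if "c \<notin> u j" for j
    using assms(2) that by (meson not_le)
qed

lemma Suc_le_first_exit_iff:
  assumes "antimono u" and "\<exists>k. c \<notin> u k"
  shows "Suc k \<le> first_exit u c \<longleftrightarrow> c \<in> u k"
proof
  assume "Suc k \<le> first_exit u c"
  then show "c \<in> u k"
    unfolding first_exit_def by (metis Suc_le_lessD not_less_Least)
next
  assume "c \<in> u k"
  have "c \<notin> u (first_exit u c)"
    unfolding first_exit_def using assms(2) by (rule LeastI_ex)
  with \<open>c \<in> u k\<close> antimonoD[OF assms(1)] show "Suc k \<le> first_exit u c"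
    by (meson not_less_eq_eq subsetD)
qed

lemma pratt_comonoid_first_exit_diagonal:
  assumes P: "pratt_comonoid A W"
    and u: "\<And>k. u k \<in> W" "antimono u" and exhaust: "\<And>c. c \<in> A \<Longrightarrow> \<exists>k. c \<notin> u k"
    and F: "\<And>k. F k \<in> W" "mono F"
  shows "{c. c \<in> F (first_exit u c)} \<in> W"
proof -
  have W: "W \<subseteq> Pow A" "{} \<in> W" "A \<in> W"
    and diagonal_W: "\<And>C. crossword A W C \<Longrightarrow> diagonal C \<in> W"
    using P unfolding pratt_comonoid_def by auto
  have F_A: "F k \<subseteq> A" and u_A: "u k \<subseteq> A" for k
    using F(1) u(1) W(1) by blast+
  define C where "C = {(a, b). a \<in> A \<and> b \<in> F (first_exit u a)}"
  have column_W: "{a. (a, b) \<in> C} \<in> W" for b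
  proof (cases "\<exists>k. b \<in> F k")
    case False
    then have "{a. (a, b) \<in> C} = {}" unfolding C_def by auto
    then show ?thesis using W(2) by simp
  next
    case True
    define k0 where "k0 = (LEAST k. b \<in> F k)"
    have "b \<in> F k0" unfolding k0_def using True by (rule LeastI_ex)
    then have "b \<in> F k \<longleftrightarrow> k0 \<le> k" for k
      using monoD[OF F(2)] unfolding k0_def by (blast intro: Least_le)
    then have column: "{a. (a, b) \<in> C} = {a \<in> A. k0 \<le> first_exit u a}"
      unfolding C_def by auto
    show ?thesis
    proof (cases k0)
      case 0
      then show ?thesis using column W(3) by simp
    next
      case (Suc j)
      then have "{a. (a, b) \<in> C} = u j"
        using column Suc_le_first_exit_iff[OF u(2) exhaust] u_A by blast
      then show ?thesis using u(1) by simp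
    qed
  qed
  have "crossword A W C"
    unfolding crossword_def C_def using F_A F(1) column_W[unfolded C_def] by auto
  then have "diagonal C \<in> W" by (rule diagonal_W)
  moreover have "diagonal C = {c. c \<in> F (first_exit u c)}"
    unfolding diagonal_def C_def using F_A by auto
  ultimately show ?thesis by simp
qed

definition staircase :: "('a \<Rightarrow> nat) \<Rightarrow> (nat \<Rightarrow> 'a set) \<Rightarrow> nat set \<Rightarrow> 'a set" where
  "staircase m v X = {c. c \<in> v (if m c \<in> X then Suc (m c) else m c)}"

lemma staircase_in_pratt_comonoid:
  assumes "pratt_comonoid A W"
    and "\<And>k. u k \<in> W" "antimono u" "\<And>c. c \<in> A \<Longrightarrow> \<exists>k. c \<notin> u k"
    and v: "\<And>k. v k \<in> W" "mono v"
  shows "staircase (first_exit u) v X \<in> W"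
proof -
  define F where "F k = v (if k \<in> X then Suc k else k)" for k
  have "mono F"
  proof
    fix k l :: nat assume "k \<le> l"
    then have "(if k \<in> X then Suc k else k) \<le> (if l \<in> X then Suc l else l)"
      by (cases "k = l") auto
    then show "F k \<le> F l" unfolding F_def using monoD[OF v(2)] by blast
  qed
  then show ?thesis
    using pratt_comonoid_first_exit_diagonal[OF assms(1-4), of F] v(1)
    unfolding staircase_def F_def by simp
qed

lemma staircase_Union:
  assumes "mono v" and "Z \<noteq> {}"
  shows "staircase m v (\<Union>Z) = (\<Union>X\<in>Z. staircase m v X)"
proof (intro set_eqI)
  fix c
  have "v (m c) \<subseteq> v (Suc (m c))" using assms(1) by (simp add: mono_iff_le_Suc)
  then show "c \<in> staircase m v (\<Union>Z) \<longleftrightarrow> c \<in> (\<Union>X\<in>Z. staircase m v X)"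
    using assms(2) unfolding staircase_def by auto
qed

lemma staircase_Inter:
  assumes "mono v" and "Z \<noteq> {}"
  shows "staircase m v (\<Inter>Z) = (\<Inter>X\<in>Z. staircase m v X)"
proof (intro set_eqI)
  fix c
  have "v (m c) \<subseteq> v (Suc (m c))" using assms(1) by (simp add: mono_iff_le_Suc)
  then show "c \<in> staircase m v (\<Inter>Z) \<longleftrightarrow> c \<in> (\<Inter>X\<in>Z. staircase m v X)"
    using assms(2) unfolding staircase_def by auto
qed

lemma staircase_subset_iff:
  assumes "mono v" and w: "\<And>k. m (w k) = k" "\<And>k. w k \<in> v (Suc k) - v k"
  shows "staircase m v X \<subseteq> staircase m v Y \<longleftrightarrow> X \<subseteq> Y"
proof
  have "w k \<in> staircase m v Z \<longleftrightarrow> k \<in> Z" for k Z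
    using w unfolding staircase_def by auto
  then show "staircase m v X \<subseteq> staircase m v Y \<Longrightarrow> X \<subseteq> Y" by blast
next
  assume "X \<subseteq> Y"
  have "v n \<subseteq> v (Suc n)" for n using assms(1) by (simp add: mono_iff_le_Suc)
  with \<open>X \<subseteq> Y\<close> show "staircase m v X \<subseteq> staircase m v Y"
    unfolding staircase_def by auto
qed

lemma complete_sublattice_range:
  assumes "range \<phi> \<subseteq> W"
    and "\<And>Z. Z \<noteq> {} \<Longrightarrow> \<phi> (\<Union>Z) = (\<Union>X\<in>Z. \<phi> X)"
    and "\<And>Z. Z \<noteq> {} \<Longrightarrow> \<phi> (\<Inter>Z) = (\<Inter>X\<in>Z. \<phi> X)"
  shows "complete_sublattice W (range \<phi>)"
  unfolding complete_sublattice_def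
proof (intro conjI allI impI)
  fix T assume T: "T \<subseteq> range \<phi> \<and> T \<noteq> {}"
  define Z where "Z = {X. \<phi> X \<in> T}"
  have "T = \<phi> ` Z" and "Z \<noteq> {}"
    unfolding Z_def using T by auto
  then show "\<Union>T \<in> range \<phi>" and "\<Inter>T \<in> range \<phi>"
    using assms(2,3) by (metis rangeI)+
qed (use assms(1) in blast)

lemma pratt_comonoid_Pow_complete_sublattice:
  assumes "pratt_comonoid A W"
    and u: "\<And>k. u k \<in> W" "antimono u" "\<And>c. c \<in> A \<Longrightarrow> \<exists>k. c \<notin> u k"
    and v: "\<And>k. v k \<in> W" "mono v"
    and w: "\<And>k. first_exit u (w k) = k" "\<And>k. w k \<in> v (Suc k) - v k"
  shows "\<exists>\<phi> :: nat set \<Rightarrow> 'a set. range \<phi> \<subseteq> W \<and> complete_sublattice W (range \<phi>) \<and>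
           (\<forall>X Y. \<phi> X \<subseteq> \<phi> Y \<longleftrightarrow> X \<subseteq> Y)"
proof -
  let ?\<phi> = "staircase (first_exit u) v"
  have "range ?\<phi> \<subseteq> W"
    by (intro image_subsetI staircase_in_pratt_comonoid[OF assms(1) u v])
  moreover from this have "complete_sublattice W (range ?\<phi>)"
    by (rule complete_sublattice_range)
      (simp_all add: staircase_Union[OF v(2)] staircase_Inter[OF v(2)])
  moreover have "?\<phi> X \<subseteq> ?\<phi> Y \<longleftrightarrow> X \<subseteq> Y" for X Y
    by (rule staircase_subset_iff[OF v(2) w])
  ultimately show ?thesis
    by blast
qed

lemma interleaving_witnesses:
  assumes "(\<Inter>m. x m) = {}" and "\<And>m n. \<not> x m \<inter> (\<Union>i. y i) \<subseteq> y n"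
  obtains w and a b :: "nat \<Rightarrow> nat"
  where "\<And>k. w k \<in> x (a k) - x (a (Suc k))" and "\<And>k. w k \<in> y (b (Suc k)) - y (b k)"
proof -
  have "\<forall>p q. \<exists>c s t. c \<in> x p - x s \<and> c \<in> y t - y q"
    using assms by blast
  then obtain c s t
    where wit: "\<And>p q. c p q \<in> x p - x (s p q)" "\<And>p q. c p q \<in> y (t p q) - y q"
    by metis
  define ab where "ab k = ((\<lambda>(p, q). (s p q, t p q)) ^^ k) (0, 0)" for k
  have "ab (Suc k) = (s (fst (ab k)) (snd (ab k)), t (fst (ab k)) (snd (ab k)))" for k
    unfolding ab_def by (simp add: case_prod_beta)
  then show thesis
    using that[where a = "\<lambda>k. fst (ab k)" and b = "\<lambda>k. snd (ab k)"
        and w = "\<lambda>k. c (fst (ab k)) (snd (ab k))"] wit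
    by simp
qed

lemma antimono_less_of_mem_notin:
  fixes x :: "'i::linorder \<Rightarrow> 'a set"
  assumes "antimono x" and "c \<in> x i" and "c \<notin> x j"
  shows "i < j"
  using assms antimonoD[OF assms(1), of j i] by (meson not_less subsetD)

lemma mono_less_of_notin_mem:
  fixes y :: "'i::linorder \<Rightarrow> 'a set"
  assumes "mono y" and "c \<notin> y i" and "c \<in> y j"
  shows "i < j"
  using assms monoD[OF assms(1), of j i] by (meson not_less subsetD)

lemma first_exit_subsequence:
  fixes x :: "nat \<Rightarrow> 'a set"
  assumes x: "antimono x" and "(\<Inter>m. x m) = {}"
    and w: "\<And>k. w k \<in> x (a k) - x (a (Suc k))"
  shows "antimono (\<lambda>k. x (a (Suc k)))" and "\<exists>k. c \<notin> x (a (Suc k))"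
    and "first_exit (\<lambda>k. x (a (Suc k))) (w k) = k"
proof -
  have a: "strict_mono a"
    unfolding strict_mono_Suc_iff
    using antimono_less_of_mem_notin[OF x, of "w k" "a k" "a (Suc k)" for k] w by simp
  show "antimono (\<lambda>k. x (a (Suc k)))"
    unfolding antimono_iff_le_Suc
    by (intro allI antimonoD[OF x]) (simp add: strict_mono_less_eq[OF a])
  obtain s where "c \<notin> x s" using assms(2) by blast
  moreover have "s \<le> a (Suc s)"
    using strict_mono_imp_increasing[OF a, of "Suc s"] by simp
  ultimately show "\<exists>k. c \<notin> x (a (Suc k))" using antimonoD[OF x] by blast
  show "first_exit (\<lambda>k. x (a (Suc k))) (w k) = k"
  proof (rule first_exit_eqI)
    show "w k \<notin> x (a (Suc k))" using w by blast
    show "w k \<in> x (a (Suc j))" if "j < k" for j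
      using that w[of k] antimonoD[OF x] strict_mono_less_eq[OF a]
      by (meson DiffD1 Suc_leI subsetD)
  qed
qed

lemma mono_subsequence:
  fixes y :: "nat \<Rightarrow> 'a set"
  assumes y: "mono y" and w: "\<And>k. w k \<in> y (b (Suc k)) - y (b k)"
  shows "mono (\<lambda>k. y (b k))"
proof -
  have "strict_mono b"
    unfolding strict_mono_Suc_iff
    using mono_less_of_notin_mem[OF y, of "w k" "b k" "b (Suc k)" for k] w by simp
  then have "mono b"
    by (rule strict_mono_mono)
  then show ?thesis
    by (intro monoI monoD[OF y] monoD[OF \<open>mono b\<close>])
qed

theorem proposition7p3:
  fixes A :: "'a set" and W :: "'a set set"
    and x y :: "nat \<Rightarrow> 'a set"
  assumes "pratt_comonoid A W"
    and "\<And>n. x n \<in> W" and "\<And>n. x (Suc n) \<subseteq> x n"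
    and "\<And>n. y n \<in> W" and "\<And>n. y n \<subseteq> y (Suc n)"
    and "(\<Inter>m. x m) = {}"
    and "\<And>m n. \<not> (x m \<inter> (\<Union>i. y i) \<subseteq> y n)"
  shows "(\<exists>f :: nat set \<Rightarrow> 'a set. inj f \<and> range f \<subseteq> W) \<and>
         (\<exists>S \<phi>. complete_sublattice W S \<and> bij_betw \<phi> (UNIV :: nat set set) S \<and>
            (\<forall>X Y. \<phi> X \<subseteq> \<phi> Y \<longleftrightarrow> X \<subseteq> Y))"
proof -
  have x: "antimono x" and y: "mono y"
    using assms(3,5) by (simp_all add: antimono_iff_le_Suc mono_iff_le_Suc)
  obtain w a b where wx: "\<And>k. w k \<in> x (a k) - x (a (Suc k))"
    and wy: "\<And>k. w k \<in> y (b (Suc k)) - y (b k)"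
    using interleaving_witnesses[OF assms(6,7)] by metis
  note u = first_exit_subsequence[where a = a and w = w, OF x assms(6) wx]
  obtain \<phi> :: "nat set \<Rightarrow> 'a set" where "range \<phi> \<subseteq> W" "complete_sublattice W (range \<phi>)"
    and embedding: "\<forall>X Y. \<phi> X \<subseteq> \<phi> Y \<longleftrightarrow> X \<subseteq> Y"
    using pratt_comonoid_Pow_complete_sublattice[OF assms(1,2) u(1,2) assms(4)
        mono_subsequence[where b = b and w = w, OF y wy] u(3) wy]
    by blast
  moreover from embedding have "inj \<phi>"
    by (intro injI) blast
  moreover from \<open>inj \<phi>\<close> have "bij_betw \<phi> UNIV (range \<phi>)"
    by (rule inj_on_imp_bij_betw)
  ultimately show ?thesis
    by blast
qed

end
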